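(* Let $X$, $Y$ be Banach spaces with $Y$ continuously embedded in $X$, and let $T\in(0,\infty]$. Assume: $G$ generates a $C_0$-semigroup $(S(t))_{t\ge0}$ on $X$ with $S(t)Y\subseteq Y$ for every $t\ge0$ and $t\mapsto S(t)y$ continuous from $[0,\infty)$ to $Y$ for every $y\in Y$; there is $\eta:(0,\infty)\to(0,\infty)$ with $\eta(\delta)\to0$ as $\delta\to0^+$ such that for all $0\le s_0<s_1$ and $\varphi\in C([s_0,s_1],X)$, $\int_{s_0}^{s_1}S(s_1-s)\varphi(s)\,ds\in Y$ and $\|\int_{s_0}^{s_1}S(s_1-s)\varphi(s)\,ds\|_Y\le\eta(s_1-s_0)\|\varphi\|_{C([s_0,s_1],X)}$; $\mathcal D(G)$ is a dense subspace of $Y$; and $\gamma\in\mathbb R$, $H\in\mathcal B(Y,X)$ are such that $G-\gamma H$ generates a $C_0$-semigroup $(S_\gamma(t))_{t\ge0}$ on $X$. Let $t_0,\tau\in[0,T)$ with $t_0<\tau$, $f\in C([t_0,\tau],X)$, $\mathring u\in Y$, and define $u(t)=S(t-t_0)\mathring u+\int_{t_0}^tS(t-s)f(s)\,ds$ for $t\in[t_0,\tau]$. Then $u(t)=S_\gamma(t-t_0)\mathring u+\int_{t_0}^tS_\gamma(t-s)[f(s)+\gamma Hu(s)]\,ds$ for all $t\in[t_0,\tau]$. *)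

theory Defs
  imports "HOL-Analysis.Analysis" "HOL-Library.Extended_Real"
begin

definition c0_semigroup :: "(real \<Rightarrow> 'x::banach \<Rightarrow> 'x) \<Rightarrow> bool" where
  "c0_semigroup S \<longleftrightarrow>
     (\<forall>t\<ge>0. bounded_linear (S t)) \<and>
     S 0 = id \<and>
     (\<forall>t\<ge>0. \<forall>s\<ge>0. S (t + s) = S t \<circ> S s) \<and>
     (\<forall>x. continuous_on {0..} (\<lambda>t. S t x))"

definition generates :: "'x set \<Rightarrow> ('x \<Rightarrow> 'x) \<Rightarrow> (real \<Rightarrow> 'x::banach \<Rightarrow> 'x) \<Rightarrow> bool" where
  "generates D G S \<longleftrightarrow>
     c0_semigroup S \<and>
     D = {x. \<exists>l. ((\<lambda>h. (1 / h) *\<^sub>R (S h x - x)) \<longlongrightarrow> l) (at_right 0)} \<and>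
     (\<forall>x\<in>D. ((\<lambda>h. (1 / h) *\<^sub>R (S h x - x)) \<longlongrightarrow> G x) (at_right 0))"

end

theory Submission
  imports Defs
begin

(*
  Integrating the mild formula shows that the mild solution u of u' = G u + f is an integrated
  solution: U(t) = int_t0^t u lies in D(G) and G U(t) = u(t) - u(t0) - int_t0^t f.  Conversely a
  continuous integrated solution is the mild one: for the difference e of two solutions,
  E(s) = int_t0^s e satisfies G E(s) = e(s), so s |-> S(t - s) E(s) has derivative zero and E = 0.
  The smoothing estimate makes u continuous with values in Y: in
  u(s) = S(s - a) u(a) + int_a^s S(s - r) f(r) dr, with a slightly to the left of s, the last
  term has Y-norm at most eta(s - a) sup |f|.  Hence H commutes with the integral of u, so u is an
  integrated solution, and therefore the mild solution, for G - gamma H with forcing f + gamma H u.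
*)

lemma banach_steinhaus:
  fixes L :: "'i \<Rightarrow> 'a::banach \<Rightarrow> 'b::real_normed_vector"
  assumes lin: "\<And>i. i \<in> I \<Longrightarrow> bounded_linear (L i)"
    and pointwise: "\<And>x. bounded ((\<lambda>i. L i x) ` I)"
  shows "\<exists>M\<ge>0. \<forall>i\<in>I. \<forall>x. norm (L i x) \<le> M * norm x"
proof -
  define E where "E n = (\<Inter>i\<in>I. {x. norm (L i x) \<le> real n})" for n :: nat
  have closed_E: "closed (E n)" for n
    unfolding E_def
    by (intro closed_INT ballI closed_Collect_le continuous_on_norm linear_continuous_on lin continuous_on_const)
  have "x \<in> (\<Union>n. E n)" for x
  proof -
    obtain B where "\<forall>i\<in>I. norm (L i x) \<le> B" using pointwise[of x] by (auto simp: bounded_iff)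
    moreover obtain n :: nat where "B \<le> real n" using real_arch_simple by blast
    ultimately have "x \<in> E n" by (force simp: E_def)
    then show ?thesis by blast
  qed
  then have "(\<Union>n. E n) = UNIV" by blast
  then obtain n where "interior (E n) \<noteq> {}"
    using Baire_category_alt[of euclidean "range E"] closed_E
    by (force simp: completely_metrizable_space_euclidean)
  then obtain x0 r where r: "r > 0" "ball x0 r \<subseteq> E n"
    by (metis ex_in_conv interior_subset open_contains_ball open_interior subset_trans)
  \<comment> \<open>every vector of norm below r is a difference of two points of the ball\<close>
  have small: "norm (L i z) \<le> 2 * real n" if i: "i \<in> I" and z: "norm z < r" for i z
  proof -
    have "x0 + z \<in> E n" "x0 \<in> E n" using r z by (auto simp: dist_norm)
    then have "norm (L i (x0 + z)) \<le> real n" "norm (L i x0) \<le> real n" using i by (auto simp: E_def)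
    moreover have "L i z = L i (x0 + z) - L i x0" using lin[OF i] by (simp add: linear_simps)
    ultimately show ?thesis by (metis norm_triangle_ineq4 add_mono mult_2 order_trans)
  qed
  have "norm (L i x) \<le> (4 * real n / r) * norm x" if i: "i \<in> I" for i x
  proof (cases "x = 0")
    case True
    then show ?thesis using lin[OF i] by (simp add: linear_simps)
  next
    case False
    define c where "c = r / (2 * norm x)"
    have c: "c > 0" using r False by (simp add: c_def)
    have "norm (c *\<^sub>R x) < r" using r False by (simp add: c_def)
    then have "norm (L i (c *\<^sub>R x)) \<le> 2 * real n" by (rule small[OF i])
    then have "c * norm (L i x) \<le> 2 * real n"
      using lin[OF i] c by (simp add: linear_simps)
    then show ?thesis using c r False by (simp add: c_def field_simps)
  qed
  then show ?thesis using r by (intro exI[of _ "4 * real n / r"]) auto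
qed

lemma continuous_on_local_propagation:
  fixes \<phi> :: "real \<Rightarrow> 'a::real_normed_vector" and P :: "real \<Rightarrow> 'a \<Rightarrow> 'a"
  assumes P_cont: "\<And>z. continuous_on {0..} (\<lambda>t. P t z)" and P_0: "\<And>z. P 0 z = z"
    and step: "\<And>a s. t0 \<le> a \<Longrightarrow> a < s \<Longrightarrow> s \<le> \<tau> \<Longrightarrow> norm (\<phi> s - P (s - a) (\<phi> a)) \<le> \<epsilon> (s - a)"
    and \<epsilon>: "(\<epsilon> \<longlongrightarrow> 0) (at_right 0)"
  shows "continuous_on {t0..\<tau>} \<phi>"
  unfolding continuous_on_iff
proof (intro ballI allI impI)
  fix s0 e :: real assume s0: "s0 \<in> {t0..\<tau>}" and e: "e > 0"
  have "\<forall>\<^sub>F \<delta> in at_right 0. dist (\<epsilon> \<delta>) 0 < e / 3" using tendstoD[OF \<epsilon>, of "e / 3"] e by simp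
  then obtain \<rho> where \<rho>: "\<rho> > 0" "\<And>\<delta>. 0 < \<delta> \<Longrightarrow> \<delta> < \<rho> \<Longrightarrow> \<epsilon> \<delta> < e / 3"
    unfolding eventually_at_right_field dist_real_def by (metis abs_less_iff diff_zero)
  \<comment> \<open>start at a point a at most \<rho>/2 left of s0: near s0 the remainder is then below e/3,
    and what is left, P (s - a) (\<phi> a), is continuous in s\<close>
  define a where "a = max t0 (s0 - \<rho> / 2)"
  have a: "t0 \<le> a" "s0 - \<rho> / 2 \<le> a" "a \<le> s0" "a = t0 \<or> a = s0 - \<rho> / 2"
    using s0 \<rho>(1) by (auto simp: a_def)
  have near: "dist (\<phi> s) (P (s - a) (\<phi> a)) < e / 3" if "s \<in> {t0..\<tau>}" "a \<le> s" "s < a + \<rho>" for s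
  proof (cases "s = a")
    case True
    then show ?thesis using e by (simp add: P_0)
  next
    case False
    then have "norm (\<phi> s - P (s - a) (\<phi> a)) \<le> \<epsilon> (s - a)" using that a by (intro step) auto
    also have "\<dots> < e / 3" using that False by (intro \<rho>(2)) auto
    finally show ?thesis by (simp add: dist_norm)
  qed
  obtain d where d: "d > 0"
    "\<And>t. t \<in> {0..} \<Longrightarrow> dist t (s0 - a) < d \<Longrightarrow> dist (P t (\<phi> a)) (P (s0 - a) (\<phi> a)) < e / 3"
    using P_cont[of "\<phi> a"] e a(3) unfolding continuous_on_iff
    by (metis atLeast_iff diff_ge_0_iff_ge zero_less_divide_iff zero_less_numeral)
  show "\<exists>\<delta>>0. \<forall>s\<in>{t0..\<tau>}. dist s s0 < \<delta> \<longrightarrow> dist (\<phi> s) (\<phi> s0) < e"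
  proof (intro exI[of _ "min d (\<rho> / 2)"] conjI ballI impI)
    fix s assume s: "s \<in> {t0..\<tau>}" and "dist s s0 < min d (\<rho> / 2)"
    then have "\<bar>s - s0\<bar> < d" "\<bar>s - s0\<bar> < \<rho> / 2" by (simp_all add: dist_real_def)
    then have s_a: "a \<le> s" "s < a + \<rho>" "dist (s - a) (s0 - a) < d"
      using s a unfolding dist_real_def abs_less_iff by auto
    have "dist (\<phi> s) (\<phi> s0) \<le> dist (\<phi> s) (P (s - a) (\<phi> a))
        + dist (P (s - a) (\<phi> a)) (P (s0 - a) (\<phi> a)) + dist (\<phi> s0) (P (s0 - a) (\<phi> a))"
      by (metis dist_commute dist_triangle_le add_mono order_refl dist_triangle)
    also have "\<dots> < e / 3 + e / 3 + e / 3"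
      using near[OF s s_a(1,2)] near[OF s0 a(3)] d(2)[of "s - a"] s_a a \<rho>(1) by (intro add_strict_mono) auto
    finally show "dist (\<phi> s) (\<phi> s0) < e" by simp
  qed (use d \<rho> in auto)
qed

lemma uniform_limit_average:
  fixes K :: "real \<times> real \<Rightarrow> 'a::banach"
  assumes K: "continuous_on ({0..1} \<times> {a..b + 1}) K"
  shows "uniform_limit {a..b} (\<lambda>h s. (1 / h) *\<^sub>R integral {s..s + h} (\<lambda>\<sigma>. K (s + h - \<sigma>, \<sigma>)))
           (\<lambda>s. K (0, s)) (at_right 0)"
  unfolding uniform_limit_iff
proof (intro allI impI)
  fix e :: real assume e: "e > 0"
  have "uniformly_continuous_on ({0..1} \<times> {a..b + 1}) K"
    by (rule compact_uniformly_continuous[OF K]) (simp add: compact_Times)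
  then obtain d where d: "d > 0" "\<And>p p'. p \<in> {0..1} \<times> {a..b + 1} \<Longrightarrow> p' \<in> {0..1} \<times> {a..b + 1}
      \<Longrightarrow> dist p' p < d \<Longrightarrow> dist (K p') (K p) < e / 2"
    using e unfolding uniformly_continuous_on_def by (meson half_gt_zero)
  have "\<forall>\<^sub>F h in at_right 0. h \<in> {0<..<min 1 (d / 2)}"
    by (rule eventually_at_right_real) (use d in auto)
  then show "\<forall>\<^sub>F h in at_right 0. \<forall>s\<in>{a..b}.
      dist ((1 / h) *\<^sub>R integral {s..s + h} (\<lambda>\<sigma>. K (s + h - \<sigma>, \<sigma>))) (K (0, s)) < e"
  proof (rule eventually_mono, intro ballI)
    fix h s assume h: "h \<in> {0<..<min 1 (d / 2)}" and s: "s \<in> {a..b}"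
    let ?k = "\<lambda>\<sigma>. K (s + h - \<sigma>, \<sigma>)"
    have k: "continuous_on {s..s + h} ?k"
      by (rule continuous_on_compose2[OF K]) (use h s in \<open>auto intro!: continuous_intros\<close>)
    have "norm (integral {s..s + h} (\<lambda>\<sigma>. ?k \<sigma> - K (0, s))) \<le> e / 2 * (s + h - s)"
    proof (rule integral_bound)
      fix \<sigma> assume \<sigma>: "\<sigma> \<in> {s..s + h}"
      have "dist (s + h - \<sigma>, \<sigma>) (0, s) \<le> norm (s + h - \<sigma>) + norm (\<sigma> - s)"
        using norm_Pair_le[of "s + h - \<sigma>" "\<sigma> - s"] by (simp add: dist_norm)
      also have "\<dots> < d" using \<sigma> h by auto
      finally show "norm (?k \<sigma> - K (0, s)) \<le> e / 2"
        using d(2)[of "(0, s)" "(s + h - \<sigma>, \<sigma>)"] \<sigma> s h by (simp add: dist_norm)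
    qed (use h k in \<open>auto intro!: continuous_intros\<close>)
    moreover have "integral {s..s + h} (\<lambda>\<sigma>. ?k \<sigma> - K (0, s)) = integral {s..s + h} ?k - h *\<^sub>R K (0, s)"
      using integral_diff[OF integrable_continuous_real[OF k] integrable_const_ivl] h by simp
    ultimately have bound: "norm (integral {s..s + h} ?k - h *\<^sub>R K (0, s)) \<le> e / 2 * h" by simp
    have "(1 / h) *\<^sub>R integral {s..s + h} ?k - K (0, s)
        = (1 / h) *\<^sub>R (integral {s..s + h} ?k - h *\<^sub>R K (0, s))"
      using h by (simp add: algebra_simps)
    then have "norm ((1 / h) *\<^sub>R integral {s..s + h} ?k - K (0, s))
        = (1 / h) * norm (integral {s..s + h} ?k - h *\<^sub>R K (0, s))"
      using h by simp
    also have "\<dots> \<le> (1 / h) * (e / 2 * h)" using bound h by (intro mult_left_mono) auto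
    also have "\<dots> < e" using h e by simp
    finally show "dist ((1 / h) *\<^sub>R integral {s..s + h} ?k) (K (0, s)) < e" by (simp add: dist_norm)
  qed
qed

lemma tendsto_integral_uniform_limit:
  fixes f :: "'i \<Rightarrow> real \<Rightarrow> 'a::banach"
  assumes lim: "uniform_limit {a..b} f l F" and cont: "\<forall>\<^sub>F n in F. continuous_on {a..b} (f n)"
    and F: "F \<noteq> bot"
  shows "((\<lambda>n. integral {a..b} (f n)) \<longlongrightarrow> integral {a..b} l) F"
proof -
  have l: "continuous_on {a..b} l" by (rule uniform_limit_theorem[OF cont lim]) (use F in simp)
  \<comment> \<open>the library lemma wants every member of the family continuous, so patch the others by l\<close>
  define f' where "f' n = (if continuous_on {a..b} (f n) then f n else l)" for n
  have eq: "\<forall>\<^sub>F n in F. f' n = f n" using cont by eventually_elim (simp add: f'_def)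
  have "uniform_limit {a..b} f' l F"
    using lim by (subst uniform_limit_cong[OF eventually_mono[OF eq]]) auto
  moreover have "continuous_on {a..b} (f' n)" for n using l by (simp add: f'_def)
  ultimately obtain I J where I: "\<And>n. (f' n has_integral I n) {a..b}" and J: "(l has_integral J) {a..b}"
    and "(I \<longlongrightarrow> J) F"
    using uniform_limit_integral F by blast
  moreover have "I = (\<lambda>n. integral {a..b} (f' n))" "J = integral {a..b} l"
    using I J by (auto intro!: ext integral_unique[symmetric])
  ultimately have "((\<lambda>n. integral {a..b} (f' n)) \<longlongrightarrow> integral {a..b} l) F" by simp
  then show ?thesis
    by (rule Lim_transform_eventually) (use eq in \<open>auto elim: eventually_mono\<close>)
qed

lemma integral_translate_diff:
  fixes w :: "real \<Rightarrow> 'a::banach"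
  assumes w: "continuous_on {a..b + h} w" and "a \<le> b" "0 \<le> h"
  shows "integral {a..b} (\<lambda>s. w (s + h) - w s) = integral {b..b + h} w - integral {a..a + h} w"
proof -
  have int: "w integrable_on {a..b + h}" using integrable_continuous_real[OF w] .
  have "integral {a..b} (\<lambda>s. w (s + h)) = integral {a + h..b + h} w"
    using integral_shift_Icc_real[of a b w h] by (simp add: o_def add.commute)
  moreover have "integral {a..a + h} w + integral {a + h..b + h} w = integral {a..b + h} w"
    "integral {a..b} w + integral {b..b + h} w = integral {a..b + h} w"
    using assms int by (auto intro: Henstock_Kurzweil_Integration.integral_combine)
  moreover have "(\<lambda>s. w (s + h)) integrable_on {a..b}" "w integrable_on {a..b}"
    using assms by (auto intro!: integrable_continuous_real continuous_on_compose2[OF w] continuous_intros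
        intro: continuous_on_subset[OF w])
  ultimately show ?thesis by (simp add: integral_diff algebra_simps)
qed

lemma has_vector_derivative_iff_quotient:
  fixes f :: "real \<Rightarrow> 'a::real_normed_vector"
  shows "(f has_vector_derivative f') (at x within S) \<longleftrightarrow>
         ((\<lambda>y. (1 / (y - x)) *\<^sub>R (f y - f x)) \<longlongrightarrow> f') (at x within S)"
proof -
  have "norm ((1 / norm (y - x)) *\<^sub>R (f y - (f x + (y - x) *\<^sub>R f')))
      = norm ((1 / (y - x)) *\<^sub>R (f y - f x) - f')" if "y \<noteq> x" for y
  proof -
    have "(1 / (y - x)) *\<^sub>R (f y - (f x + (y - x) *\<^sub>R f'))
        = (1 / (y - x)) *\<^sub>R (f y - f x) - (1 / (y - x)) *\<^sub>R ((y - x) *\<^sub>R f')"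
      by (simp only: diff_diff_add[symmetric] scaleR_right_diff_distrib)
    also have "(1 / (y - x)) *\<^sub>R ((y - x) *\<^sub>R f') = f'" using that by simp
    finally have "norm ((1 / (y - x)) *\<^sub>R (f y - f x) - f')
        = norm ((1 / (y - x)) *\<^sub>R (f y - (f x + (y - x) *\<^sub>R f')))" by simp
    then show ?thesis by simp
  qed
  then have "\<forall>\<^sub>F y in at x within S. norm ((1 / norm (y - x)) *\<^sub>R (f y - (f x + (y - x) *\<^sub>R f')))
      = norm ((1 / (y - x)) *\<^sub>R (f y - f x) - f')"
    by (simp add: eventually_at_filter)
  then have "((\<lambda>y. norm ((1 / norm (y - x)) *\<^sub>R (f y - (f x + (y - x) *\<^sub>R f')))) \<longlongrightarrow> 0) (at x within S)
      \<longleftrightarrow> ((\<lambda>y. norm ((1 / (y - x)) *\<^sub>R (f y - f x) - f')) \<longlongrightarrow> 0) (at x within S)"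
    by (rule tendsto_cong)
  then show ?thesis
    unfolding has_vector_derivative_def has_derivative_within tendsto_norm_zero_iff LIM_zero_iff
    by (simp add: bounded_linear_scaleR_left)
qed

section \<open>C_0-semigroups and their generators\<close>

lemma c0_semigroup_bounded_linear: "c0_semigroup S \<Longrightarrow> t \<ge> 0 \<Longrightarrow> bounded_linear (S t)"
  by (simp add: c0_semigroup_def)

lemma c0_semigroup_0: "c0_semigroup S \<Longrightarrow> S 0 x = x"
  by (simp add: c0_semigroup_def)

lemma c0_semigroup_add: "c0_semigroup S \<Longrightarrow> t \<ge> 0 \<Longrightarrow> s \<ge> 0 \<Longrightarrow> S (t + s) x = S t (S s x)"
  by (simp add: c0_semigroup_def)

lemma c0_semigroup_continuous: "c0_semigroup S \<Longrightarrow> continuous_on {0..} (\<lambda>t. S t x)"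
  by (simp add: c0_semigroup_def)

lemma c0_semigroup_linear_simps:
  assumes "c0_semigroup S" "t \<ge> 0"
  shows "S t (x + y) = S t x + S t y" "S t (x - y) = S t x - S t y"
    "S t (c *\<^sub>R x) = c *\<^sub>R S t x" "S t 0 = 0"
  using linear_simps[OF c0_semigroup_bounded_linear[OF assms]] by auto

lemma c0_semigroup_locally_bounded:
  assumes S: "c0_semigroup S"
  obtains M where "M \<ge> 0" "\<And>t x. t \<in> {0..c} \<Longrightarrow> norm (S t x) \<le> M * norm x"
proof -
  have "bounded ((\<lambda>t. S t x) ` {0..c})" for x
    by (intro compact_imp_bounded compact_continuous_image
        continuous_on_subset[OF c0_semigroup_continuous[OF S]]) auto
  then have "\<exists>M\<ge>0. \<forall>t\<in>{0..c}. \<forall>x. norm (S t x) \<le> M * norm x"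
    by (intro banach_steinhaus c0_semigroup_bounded_linear[OF S]) auto
  then show ?thesis using that by blast
qed

lemma tendsto_c0_semigroup:
  assumes S: "c0_semigroup S" and \<alpha>: "(\<alpha> \<longlongrightarrow> a) F" and \<phi>: "(\<phi> \<longlongrightarrow> p) F"
    and nonneg: "\<forall>\<^sub>F z in F. \<alpha> z \<ge> 0"
  shows "((\<lambda>z. S (\<alpha> z) (\<phi> z)) \<longlongrightarrow> S a p) F"
proof (cases "F = bot")
  case False
  have a: "a \<ge> 0" using tendsto_lowerbound[OF \<alpha> nonneg False] .
  obtain M where M: "M \<ge> 0" "\<And>t x. t \<in> {0..a + 1} \<Longrightarrow> norm (S t x) \<le> M * norm x"
    using c0_semigroup_locally_bounded[OF S] by blast
  have "\<forall>\<^sub>F z in F. \<alpha> z < a + 1" using order_tendstoD(2)[OF \<alpha>] by simp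
  with nonneg have "\<forall>\<^sub>F z in F. \<alpha> z \<in> {0..a + 1}" by eventually_elim auto
  then have "\<forall>\<^sub>F z in F. norm (S (\<alpha> z) (\<phi> z - p)) \<le> M * norm (\<phi> z - p)"
    by eventually_elim (rule M(2))
  moreover have "((\<lambda>z. M * norm (\<phi> z - p)) \<longlongrightarrow> 0) F"
    using tendsto_mult_right_zero[OF tendsto_norm_zero[OF LIM_zero[OF \<phi>]]] .
  ultimately have "((\<lambda>z. S (\<alpha> z) (\<phi> z - p)) \<longlongrightarrow> 0) F"
    by (rule Lim_null_comparison)
  moreover have "((\<lambda>z. S (\<alpha> z) p) \<longlongrightarrow> S a p) F"
    by (rule continuous_on_tendsto_compose[OF c0_semigroup_continuous[OF S] \<alpha>])
      (use a nonneg in auto)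
  ultimately have "((\<lambda>z. S (\<alpha> z) (\<phi> z - p) + S (\<alpha> z) p) \<longlongrightarrow> S a p) F"
    using tendsto_add by fastforce
  moreover have "\<forall>\<^sub>F z in F. S (\<alpha> z) (\<phi> z - p) + S (\<alpha> z) p = S (\<alpha> z) (\<phi> z)"
    using nonneg by eventually_elim (simp add: c0_semigroup_linear_simps[OF S])
  ultimately show ?thesis by (rule Lim_transform_eventually)
qed simp

lemma continuous_on_c0_semigroup:
  assumes S: "c0_semigroup S" and \<alpha>: "continuous_on K \<alpha>" "\<And>s. s \<in> K \<Longrightarrow> \<alpha> s \<ge> 0"
    and \<phi>: "continuous_on K \<phi>"
  shows "continuous_on K (\<lambda>s. S (\<alpha> s) (\<phi> s))"
  unfolding continuous_on_def
proof
  fix s assume "s \<in> K"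
  moreover have "\<forall>\<^sub>F z in at s within K. z \<in> K" by (simp add: eventually_at_filter)
  ultimately show "((\<lambda>s. S (\<alpha> s) (\<phi> s)) \<longlongrightarrow> S (\<alpha> s) (\<phi> s)) (at s within K)"
    using \<alpha> \<phi> by (intro tendsto_c0_semigroup[OF S])
      (auto simp: continuous_on_def elim: eventually_mono)
qed

lemma c0_semigroup_difference_quotient:
  assumes S: "c0_semigroup S" and "a \<ge> 0" "b \<ge> 0" "a \<noteq> b"
  shows "(1 / (b - a)) *\<^sub>R (S a x - S b x) = - S (min a b) ((1 / \<bar>a - b\<bar>) *\<^sub>R (S \<bar>a - b\<bar> x - x))"
proof (cases "a < b")
  case True
  then have "S b x = S a (S (b - a) x)" using c0_semigroup_add[OF S, of a "b - a"] assms by simp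
  then show ?thesis using True assms by (simp add: c0_semigroup_linear_simps[OF S] algebra_simps min_def)
next
  case False
  then have "S a x = S b (S (a - b) x)" using c0_semigroup_add[OF S, of b "a - b"] assms by simp
  moreover have "1 / (b - a) = - (1 / (a - b))" by (simp add: divide_simps)
  ultimately show ?thesis using False assms
    by (simp add: c0_semigroup_linear_simps[OF S] algebra_simps min_def)
qed

lemma generates_c0_semigroup: "generates D A S \<Longrightarrow> c0_semigroup S"
  by (simp add: generates_def)

lemma generates_tendsto:
  "generates D A S \<Longrightarrow> x \<in> D \<Longrightarrow> ((\<lambda>h. (1 / h) *\<^sub>R (S h x - x)) \<longlongrightarrow> A x) (at_right 0)"
  by (simp add: generates_def)

lemma generates_domainI:
  assumes A: "generates D A S" and lim: "((\<lambda>h. (1 / h) *\<^sub>R (S h x - x)) \<longlongrightarrow> l) (at_right 0)"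
  shows "x \<in> D \<and> A x = l"
proof
  show "x \<in> D" using A lim unfolding generates_def by blast
  then show "A x = l"
    using tendsto_unique[OF _ generates_tendsto[OF A] lim] by simp
qed

lemma generates_diff:
  assumes A: "generates D A S" and "x \<in> D" "y \<in> D"
  shows "x - y \<in> D \<and> A (x - y) = A x - A y"
proof (rule generates_domainI[OF A])
  have S: "c0_semigroup S" using generates_c0_semigroup[OF A] .
  have "\<forall>\<^sub>F h in at_right 0. (1 / h) *\<^sub>R (S h x - x) - (1 / h) *\<^sub>R (S h y - y)
      = (1 / h) *\<^sub>R (S h (x - y) - (x - y))"
    by (auto simp: eventually_at_filter c0_semigroup_linear_simps[OF S] algebra_simps)
  with tendsto_diff[OF generates_tendsto[OF A \<open>x \<in> D\<close>] generates_tendsto[OF A \<open>y \<in> D\<close>]]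
  show "((\<lambda>h. (1 / h) *\<^sub>R (S h (x - y) - (x - y))) \<longlongrightarrow> A x - A y) (at_right 0)"
    by (rule Lim_transform_eventually)
qed

lemma has_vector_derivative_c0_semigroup_orbit:
  assumes A: "generates D A S" and x: "x \<in> D" and s: "s \<in> {a..t}"
  shows "((\<lambda>y. S (t - y) x) has_vector_derivative - S (t - s) (A x)) (at s within {a..t})"
proof -
  have S: "c0_semigroup S" using generates_c0_semigroup[OF A] .
  let ?F = "at s within {a..t}"
  have near: "\<forall>\<^sub>F y in ?F. y \<in> {a..t} \<and> y \<noteq> s" by (simp add: eventually_at_filter)
  have y: "((\<lambda>y. y) \<longlongrightarrow> s) ?F" by (rule tendsto_ident_at)
  have "((\<lambda>y. - S (min (t - y) (t - s)) ((1 / \<bar>y - s\<bar>) *\<^sub>R (S \<bar>y - s\<bar> x - x)))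
      \<longlongrightarrow> - S (t - s) (A x)) ?F"
  proof (intro tendsto_minus tendsto_c0_semigroup[OF S])
    have "filterlim (\<lambda>y. \<bar>y - s\<bar>) (at_right 0) ?F"
      unfolding filterlim_at
      using near tendsto_rabs_zero[OF LIM_zero[OF y]] by (auto elim: eventually_mono)
    from filterlim_compose[OF generates_tendsto[OF A x] this]
    show "((\<lambda>y. (1 / \<bar>y - s\<bar>) *\<^sub>R (S \<bar>y - s\<bar> x - x)) \<longlongrightarrow> A x) ?F" .
    show "((\<lambda>y. min (t - y) (t - s)) \<longlongrightarrow> t - s) ?F"
      using tendsto_min[OF tendsto_diff[OF tendsto_const y] tendsto_const, of t "t - s"] by simp
    show "\<forall>\<^sub>F y in ?F. 0 \<le> min (t - y) (t - s)" using near s by (auto elim: eventually_mono)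
  qed
  moreover have "\<forall>\<^sub>F y in ?F. - S (min (t - y) (t - s)) ((1 / \<bar>y - s\<bar>) *\<^sub>R (S \<bar>y - s\<bar> x - x))
      = (1 / (y - s)) *\<^sub>R (S (t - y) x - S (t - s) x)"
    using near
  proof eventually_elim
    case (elim y)
    then show ?case
      using c0_semigroup_difference_quotient[OF S, of "t - y" "t - s" x] s by (simp add: abs_minus_commute)
  qed
  ultimately show ?thesis
    unfolding has_vector_derivative_iff_quotient by (rule Lim_transform_eventually)
qed

lemma has_vector_derivative_c0_semigroup_backward:
  assumes A: "generates D A S" and E: "(E has_vector_derivative E') (at s within {a..t})"
    and Es: "E s \<in> D" and s: "s \<in> {a..t}"
  shows "((\<lambda>y. S (t - y) (E y)) has_vector_derivative S (t - s) (E' - A (E s))) (at s within {a..t})"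
proof -
  have S: "c0_semigroup S" using generates_c0_semigroup[OF A] .
  let ?F = "at s within {a..t}"
  have near: "\<forall>\<^sub>F y in ?F. y \<in> {a..t} \<and> y \<noteq> s" by (simp add: eventually_at_filter)
  have "((\<lambda>y. S (t - y) ((1 / (y - s)) *\<^sub>R (E y - E s))) \<longlongrightarrow> S (t - s) E') ?F"
    using E near unfolding has_vector_derivative_iff_quotient
    by (intro tendsto_c0_semigroup[OF S] tendsto_intros tendsto_ident_at) (auto elim: eventually_mono)
  moreover note has_vector_derivative_c0_semigroup_orbit[OF A Es s, unfolded has_vector_derivative_iff_quotient]
  ultimately have "((\<lambda>y. S (t - y) ((1 / (y - s)) *\<^sub>R (E y - E s))
      + (1 / (y - s)) *\<^sub>R (S (t - y) (E s) - S (t - s) (E s))) \<longlongrightarrow> S (t - s) (E' - A (E s))) ?F"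
    using tendsto_add s by (fastforce simp: c0_semigroup_linear_simps[OF S])
  moreover have "\<forall>\<^sub>F y in ?F. S (t - y) ((1 / (y - s)) *\<^sub>R (E y - E s))
      + (1 / (y - s)) *\<^sub>R (S (t - y) (E s) - S (t - s) (E s))
      = (1 / (y - s)) *\<^sub>R (S (t - y) (E y) - S (t - s) (E s))"
    using near by eventually_elim (simp add: c0_semigroup_linear_simps[OF S] algebra_simps)
  ultimately show ?thesis
    unfolding has_vector_derivative_iff_quotient by (rule Lim_transform_eventually)
qed

section \<open>Mild and integrated solutions\<close>

definition mild_solution ::
    "(real \<Rightarrow> 'x \<Rightarrow> 'x) \<Rightarrow> real \<Rightarrow> real \<Rightarrow> 'x \<Rightarrow> (real \<Rightarrow> 'x) \<Rightarrow> (real \<Rightarrow> 'x::banach) \<Rightarrow> bool" where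
  "mild_solution S t0 \<tau> x g w \<longleftrightarrow>
     (\<forall>s\<in>{t0..\<tau>}. w s = S (s - t0) x + integral {t0..s} (\<lambda>\<sigma>. S (s - \<sigma>) (g \<sigma>)))"

definition integrated_solution ::
    "('x \<Rightarrow> 'x) \<Rightarrow> 'x set \<Rightarrow> real \<Rightarrow> real \<Rightarrow> 'x \<Rightarrow> (real \<Rightarrow> 'x) \<Rightarrow> (real \<Rightarrow> 'x::banach) \<Rightarrow> bool" where
  "integrated_solution A D t0 \<tau> x g w \<longleftrightarrow>
     (\<forall>t\<in>{t0..\<tau>}. integral {t0..t} w \<in> D \<and> A (integral {t0..t} w) = w t - x - integral {t0..t} g)"

lemma convolution_integrand_continuous:
  assumes S: "c0_semigroup S" and g: "continuous_on {a..b} g" and "b \<le> t"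
  shows "continuous_on {a..b} (\<lambda>\<sigma>. S (t - \<sigma>) (g \<sigma>))"
  using assms by (intro continuous_on_c0_semigroup[OF S]) (auto intro!: continuous_intros)

lemma convolution_integrable:
  assumes "c0_semigroup S" "continuous_on {a..b} g" "b \<le> t"
  shows "(\<lambda>\<sigma>. S (t - \<sigma>) (g \<sigma>)) integrable_on {a..b}"
  by (rule integrable_continuous_real[OF convolution_integrand_continuous[OF assms]])

lemma mild_solution_step:
  assumes S: "c0_semigroup S" and g: "continuous_on {t0..\<tau>} g" and w: "mild_solution S t0 \<tau> x g w"
    and as: "t0 \<le> a" "a \<le> s" "s \<le> \<tau>"
  shows "w s = S (s - a) (w a) + integral {a..s} (\<lambda>\<sigma>. S (s - \<sigma>) (g \<sigma>))"
proof -
  have int: "(\<lambda>\<sigma>. S (s - \<sigma>) (g \<sigma>)) integrable_on {t0..s}" "(\<lambda>\<sigma>. S (a - \<sigma>) (g \<sigma>)) integrable_on {t0..a}"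
    using as by (auto intro!: convolution_integrable[OF S] continuous_on_subset[OF g])
  have "S (s - a) (integral {t0..a} (\<lambda>\<sigma>. S (a - \<sigma>) (g \<sigma>)))
      = integral {t0..a} (\<lambda>\<sigma>. S (s - a) (S (a - \<sigma>) (g \<sigma>)))"
    using integral_linear[OF int(2) c0_semigroup_bounded_linear[OF S]] as by (simp add: o_def)
  also have "\<dots> = integral {t0..a} (\<lambda>\<sigma>. S (s - \<sigma>) (g \<sigma>))"
    using as by (intro integral_cong) (simp flip: c0_semigroup_add[OF S])
  finally have "S (s - a) (w a) = S (s - t0) x + integral {t0..a} (\<lambda>\<sigma>. S (s - \<sigma>) (g \<sigma>))"
    using w as by (simp add: mild_solution_def c0_semigroup_linear_simps[OF S]
        flip: c0_semigroup_add[OF S])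
  moreover have "integral {t0..a} (\<lambda>\<sigma>. S (s - \<sigma>) (g \<sigma>)) + integral {a..s} (\<lambda>\<sigma>. S (s - \<sigma>) (g \<sigma>))
      = integral {t0..s} (\<lambda>\<sigma>. S (s - \<sigma>) (g \<sigma>))"
    using as int(1) by (intro Henstock_Kurzweil_Integration.integral_combine) auto
  ultimately show ?thesis using w as by (simp add: mild_solution_def)
qed

lemma mild_solution_continuous:
  assumes S: "c0_semigroup S" and g: "continuous_on {t0..\<tau>} g" and w: "mild_solution S t0 \<tau> x g w"
  shows "continuous_on {t0..\<tau>} w"
proof -
  obtain M where M: "M \<ge> 0" "\<And>t x. t \<in> {0..\<tau> - t0} \<Longrightarrow> norm (S t x) \<le> M * norm x"
    using c0_semigroup_locally_bounded[OF S] by blast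
  obtain B where B: "\<And>\<sigma>. \<sigma> \<in> {t0..\<tau>} \<Longrightarrow> norm (g \<sigma>) \<le> B"
    using compact_imp_bounded[OF compact_continuous_image[OF g]] unfolding bounded_iff by blast
  show ?thesis
  proof (rule continuous_on_local_propagation[where P = S and \<epsilon> = "\<lambda>\<delta>. M * B * \<delta>"])
    fix a s assume as: "t0 \<le> a" "a < s" "s \<le> \<tau>"
    have "norm (integral {a..s} (\<lambda>\<sigma>. S (s - \<sigma>) (g \<sigma>))) \<le> M * B * (s - a)"
    proof (rule integral_bound)
      show "continuous_on {a..s} (\<lambda>\<sigma>. S (s - \<sigma>) (g \<sigma>))"
        using as by (intro convolution_integrand_continuous[OF S continuous_on_subset[OF g]]) auto
      fix \<sigma> assume "\<sigma> \<in> {a..s}"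
      then have "norm (S (s - \<sigma>) (g \<sigma>)) \<le> M * norm (g \<sigma>)" "norm (g \<sigma>) \<le> B"
        using as by (auto intro!: M(2) B)
      then show "norm (S (s - \<sigma>) (g \<sigma>)) \<le> M * B" by (meson M(1) mult_left_mono order_trans)
    qed (use as in auto)
    then show "norm (w s - S (s - a) (w a)) \<le> M * B * (s - a)"
      using mild_solution_step[OF S g w, of a s] as by simp
  next
    show "((\<lambda>\<delta>. M * B * \<delta>) \<longlongrightarrow> 0) (at_right 0)"
      by (rule tendsto_mult_right_zero[OF tendsto_ident_at])
  qed (simp_all add: c0_semigroup_0[OF S] c0_semigroup_continuous[OF S])
qed

lemma continuous_on_local_convolution:
  assumes S: "c0_semigroup S" and g: "continuous_on {a..b + h} g" and h: "0 \<le> h"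
  shows "continuous_on {a..b} (\<lambda>s. integral {s..s + h} (\<lambda>\<sigma>. S (s + h - \<sigma>) (g \<sigma>)))"
proof -
  define m where "m s = S (s - a) 0 + integral {a..s} (\<lambda>\<sigma>. S (s - \<sigma>) (g \<sigma>))" for s
  have m: "mild_solution S a (b + h) 0 g m" by (simp add: mild_solution_def m_def)
  have mc: "continuous_on {a..b + h} m" by (rule mild_solution_continuous[OF S g m])
  have "continuous_on {a..b} (\<lambda>s. m (s + h) - S h (m s))"
    using h by (intro continuous_on_diff continuous_on_compose2[OF mc] continuous_intros
        continuous_on_c0_semigroup[OF S] continuous_on_subset[OF mc]) auto
  then show ?thesis
  proof (rule continuous_on_eq)
    fix s assume "s \<in> {a..b}"
    then show "m (s + h) - S h (m s) = integral {s..s + h} (\<lambda>\<sigma>. S (s + h - \<sigma>) (g \<sigma>))"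
      using mild_solution_step[OF S g m, of s "s + h"] h by simp
  qed
qed

lemma mild_solution_integral_increment:
  assumes S: "c0_semigroup S" and g: "continuous_on {t0..t + h} g"
    and w: "mild_solution S t0 (t + h) x g w" and t: "t0 \<le> t" and h: "0 \<le> h"
  shows "S h (integral {t0..t} w) - integral {t0..t} w = integral {t..t + h} w - integral {t0..t0 + h} w
           - integral {t0..t} (\<lambda>s. integral {s..s + h} (\<lambda>\<sigma>. S (s + h - \<sigma>) (g \<sigma>)))"
proof -
  let ?\<rho> = "\<lambda>s. integral {s..s + h} (\<lambda>\<sigma>. S (s + h - \<sigma>) (g \<sigma>))"
  have wc: "continuous_on {t0..t + h} w" by (rule mild_solution_continuous[OF S g w])
  have w_int: "w integrable_on {t0..t}" using t h by (intro integrable_continuous_real continuous_on_subset[OF wc]) auto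
  have Sw_int: "(\<lambda>s. S h (w s)) integrable_on {t0..t}"
    using integrable_linear[OF w_int c0_semigroup_bounded_linear[OF S h]] by (simp add: o_def)
  have "S h (integral {t0..t} w) - integral {t0..t} w = integral {t0..t} (\<lambda>s. S h (w s)) - integral {t0..t} w"
    using integral_linear[OF w_int c0_semigroup_bounded_linear[OF S h]] by (simp add: o_def)
  also have "\<dots> = integral {t0..t} (\<lambda>s. S h (w s) - w s)" by (rule integral_diff[symmetric, OF Sw_int w_int])
  also have "\<dots> = integral {t0..t} (\<lambda>s. (w (s + h) - w s) - ?\<rho> s)"
  proof (rule integral_cong)
    fix s assume "s \<in> {t0..t}"
    then show "S h (w s) - w s = (w (s + h) - w s) - ?\<rho> s"
      using mild_solution_step[OF S g w, of s "s + h"] h by simp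
  qed
  also have "\<dots> = integral {t0..t} (\<lambda>s. w (s + h) - w s) - integral {t0..t} ?\<rho>"
    using h t by (intro integral_diff integrable_continuous_real continuous_on_local_convolution[OF S g]
        continuous_intros continuous_on_compose2[OF wc] continuous_on_subset[OF wc]) auto
  also have "integral {t0..t} (\<lambda>s. w (s + h) - w s) = integral {t..t + h} w - integral {t0..t0 + h} w"
    using h t by (intro integral_translate_diff continuous_on_subset[OF wc]) auto
  finally show ?thesis .
qed

lemma tendsto_integral_local_convolution:
  assumes S: "c0_semigroup S" and g: "continuous_on {t0..t + 1} g"
  shows "((\<lambda>h. integral {t0..t} (\<lambda>s. (1 / h) *\<^sub>R integral {s..s + h} (\<lambda>\<sigma>. S (s + h - \<sigma>) (g \<sigma>))))
           \<longlongrightarrow> integral {t0..t} g) (at_right 0)"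
proof (rule tendsto_integral_uniform_limit)
  have "continuous_on ({0..1} \<times> {t0..t + 1}) (\<lambda>p. S (fst p) (g (snd p)))"
    by (intro continuous_on_c0_semigroup[OF S] continuous_on_compose2[OF g] continuous_intros) auto
  from uniform_limit_average[OF this]
  show "uniform_limit {t0..t} (\<lambda>h s. (1 / h) *\<^sub>R integral {s..s + h} (\<lambda>\<sigma>. S (s + h - \<sigma>) (g \<sigma>))) g (at_right 0)"
    by (simp add: c0_semigroup_0[OF S])
  show "\<forall>\<^sub>F h in at_right 0.
      continuous_on {t0..t} (\<lambda>s. (1 / h) *\<^sub>R integral {s..s + h} (\<lambda>\<sigma>. S (s + h - \<sigma>) (g \<sigma>)))"
    using eventually_at_right_real[OF zero_less_one] by eventually_elim
      (auto intro!: continuous_intros continuous_on_local_convolution[OF S continuous_on_subset[OF g]])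
qed simp

lemma mild_solution_integrated_at:
  assumes A: "generates D A S" and g: "continuous_on {t0..t + 1} g"
    and w: "mild_solution S t0 (t + 1) x g w" and t: "t0 \<le> t"
  shows "integral {t0..t} w \<in> D \<and> A (integral {t0..t} w) = w t - x - integral {t0..t} g"
proof (rule generates_domainI[OF A])
  have S: "c0_semigroup S" using generates_c0_semigroup[OF A] .
  have wc: "continuous_on {t0..t + 1} w" using mild_solution_continuous[OF S g w] .
  define \<rho> where "\<rho> h s = integral {s..s + h} (\<lambda>\<sigma>. S (s + h - \<sigma>) (g \<sigma>))" for h s
  have "uniform_limit {t0..t} (\<lambda>h s. (1 / h) *\<^sub>R integral {s..s + h} w) w (at_right 0)"
    using uniform_limit_average[where K = "\<lambda>p. w (snd p)" and a = t0 and b = t] wc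
    by (simp add: continuous_on_compose2[OF wc] continuous_on_snd)
  from tendsto_uniform_limitI[OF this] t
  have "((\<lambda>h. (1 / h) *\<^sub>R integral {t..t + h} w) \<longlongrightarrow> w t) (at_right 0)"
    "((\<lambda>h. (1 / h) *\<^sub>R integral {t0..t0 + h} w) \<longlongrightarrow> w t0) (at_right 0)"
    by auto
  moreover have "w t0 = x" using w t by (simp add: mild_solution_def c0_semigroup_0[OF S])
  moreover note tendsto_integral_local_convolution[OF S g, folded \<rho>_def]
  ultimately have "((\<lambda>h. (1 / h) *\<^sub>R integral {t..t + h} w - (1 / h) *\<^sub>R integral {t0..t0 + h} w
      - integral {t0..t} (\<lambda>s. (1 / h) *\<^sub>R \<rho> h s)) \<longlongrightarrow> w t - x - integral {t0..t} g) (at_right 0)"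
    by (auto intro!: tendsto_diff)
  moreover have "\<forall>\<^sub>F h in at_right 0. (1 / h) *\<^sub>R integral {t..t + h} w - (1 / h) *\<^sub>R integral {t0..t0 + h} w
      - integral {t0..t} (\<lambda>s. (1 / h) *\<^sub>R \<rho> h s)
      = (1 / h) *\<^sub>R (S h (integral {t0..t} w) - integral {t0..t} w)"
    using eventually_at_right_real[OF zero_less_one]
  proof eventually_elim
    case (elim h)
    have "mild_solution S t0 (t + h) x g w" "continuous_on {t0..t + h} g"
      using w g elim by (auto simp: mild_solution_def intro: continuous_on_subset)
    from mild_solution_integral_increment[OF S this(2,1) t] elim
    show ?case by (simp add: \<rho>_def scaleR_diff_right)
  qed
  ultimately show "((\<lambda>h. (1 / h) *\<^sub>R (S h (integral {t0..t} w) - integral {t0..t} w))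
      \<longlongrightarrow> w t - x - integral {t0..t} g) (at_right 0)"
    by (rule Lim_transform_eventually)
qed

lemma mild_solution_imp_integrated:
  assumes A: "generates D A S" and g: "continuous_on {t0..\<tau>} g" and w: "mild_solution S t0 \<tau> x g w"
  shows "integrated_solution A D t0 \<tau> x g w"
  unfolding integrated_solution_def
proof
  fix t assume t: "t \<in> {t0..\<tau>}"
  \<comment> \<open>freeze g beyond \<tau>, so that the solution is defined a little past t\<close>
  define g' where "g' s = g (clamp t0 \<tau> s)" for s
  define w' where "w' s = S (s - t0) x + integral {t0..s} (\<lambda>\<sigma>. S (s - \<sigma>) (g' \<sigma>))" for s
  have g'_cont: "continuous_on {t0..t + 1} g'"
    unfolding g'_def by (rule clamp_continuous_on) (use g in simp)
  have g'_eq: "g' \<sigma> = g \<sigma>" if "\<sigma> \<in> {t0..t}" for \<sigma> using that t by (simp add: g'_def)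
  have "mild_solution S t0 (t + 1) x g' w'" by (simp add: mild_solution_def w'_def)
  from mild_solution_integrated_at[OF A g'_cont this] t
  have "integral {t0..t} w' \<in> D \<and> A (integral {t0..t} w') = w' t - x - integral {t0..t} g'" by simp
  moreover have w'_eq: "w' s = w s" if "s \<in> {t0..t}" for s
    using w that t g'_eq by (auto simp: mild_solution_def w'_def intro!: integral_cong)
  moreover have "integral {t0..t} w' = integral {t0..t} w" "integral {t0..t} g' = integral {t0..t} g"
    using w'_eq g'_eq by (auto intro!: integral_cong)
  ultimately show "integral {t0..t} w \<in> D \<and> A (integral {t0..t} w) = w t - x - integral {t0..t} g"
    using t by simp
qed

lemma integrated_solution_zero_data:
  assumes A: "generates D A S" and e: "continuous_on {t0..\<tau>} e"
    and sol: "integrated_solution A D t0 \<tau> 0 (\<lambda>_. 0) e" and t: "t \<in> {t0..\<tau>}"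
  shows "e t = 0"
proof -
  have S: "c0_semigroup S" using generates_c0_semigroup[OF A] .
  define E where "E s = integral {t0..s} e" for s
  have E: "E s \<in> D" "A (E s) = e s" if "s \<in> {t0..\<tau>}" for s
    using sol that by (simp_all add: integrated_solution_def E_def)
  have e_t: "continuous_on {t0..t} e" using continuous_on_subset[OF e] t by auto
  have "S (t - t) (E t) = S (t - t0) (E t0)"
  proof (rule has_derivative_zero_unique_strong_interval[of "{}" t0 t "\<lambda>s. S (t - s) (E s)"])
    show "continuous_on {t0..t} (\<lambda>s. S (t - s) (E s))"
      unfolding E_def
      by (intro continuous_on_c0_semigroup[OF S] indefinite_integral_continuous_1
          integrable_continuous_real e_t continuous_intros) auto
    fix s assume s: "s \<in> {t0..t} - {}"
    have "(E has_vector_derivative e s) (at s within {t0..t})"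
      unfolding E_def using integral_has_vector_derivative[OF e_t] s by blast
    from has_vector_derivative_c0_semigroup_backward[OF A this] E[of s] s t
    show "((\<lambda>s. S (t - s) (E s)) has_derivative (\<lambda>h. 0)) (at s within {t0..t})"
      by (simp add: has_vector_derivative_def c0_semigroup_linear_simps[OF S])
  qed (use t in auto)
  then have "E t = 0" using t by (simp add: E_def c0_semigroup_0[OF S] c0_semigroup_linear_simps[OF S])
  then show ?thesis using E[OF t] generates_diff[OF A, of 0 0] by simp
qed

lemma integrated_solution_imp_mild:
  assumes A: "generates D A S" and g: "continuous_on {t0..\<tau>} g" and w: "continuous_on {t0..\<tau>} w"
    and sol: "integrated_solution A D t0 \<tau> x g w"
  shows "mild_solution S t0 \<tau> x g w"
proof -
  have S: "c0_semigroup S" using generates_c0_semigroup[OF A] .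
  define m where "m s = S (s - t0) x + integral {t0..s} (\<lambda>\<sigma>. S (s - \<sigma>) (g \<sigma>))" for s
  have m: "mild_solution S t0 \<tau> x g m" by (simp add: mild_solution_def m_def)
  have m_sol: "integrated_solution A D t0 \<tau> x g m" by (rule mild_solution_imp_integrated[OF A g m])
  have m_cont: "continuous_on {t0..\<tau>} m" by (rule mild_solution_continuous[OF S g m])
  have "integrated_solution A D t0 \<tau> 0 (\<lambda>_. 0) (\<lambda>s. w s - m s)"
    unfolding integrated_solution_def
  proof
    fix t assume t: "t \<in> {t0..\<tau>}"
    have "integral {t0..t} (\<lambda>s. w s - m s) = integral {t0..t} w - integral {t0..t} m"
      using t by (intro integral_diff integrable_continuous_real continuous_on_subset[OF w]
          continuous_on_subset[OF m_cont]) auto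
    then show "integral {t0..t} (\<lambda>s. w s - m s) \<in> D \<and>
        A (integral {t0..t} (\<lambda>s. w s - m s)) = w t - m t - 0 - integral {t0..t} (\<lambda>_. 0)"
      using generates_diff[OF A] sol m_sol t by (simp add: integrated_solution_def)
  qed
  then have "w t - m t = 0" if "t \<in> {t0..\<tau>}" for t
    using integrated_solution_zero_data[OF A continuous_on_diff[OF w m_cont] _ that] by simp
  then show ?thesis by (simp add: mild_solution_def m_def)
qed

section \<open>Perturbation by an operator defined on the embedded space\<close>

lemma integrated_solution_perturb:
  assumes sol: "integrated_solution A D t0 \<tau> x g w"
    and B: "\<And>t. t \<in> {t0..\<tau>} \<Longrightarrow> ((\<lambda>s. B (w s)) has_integral B (integral {t0..t} w)) {t0..t}"
    and g: "\<And>t. t \<in> {t0..\<tau>} \<Longrightarrow> g integrable_on {t0..t}"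
  shows "integrated_solution (\<lambda>y. A y - B y) D t0 \<tau> x (\<lambda>s. g s + B (w s)) w"
  unfolding integrated_solution_def
proof
  fix t assume t: "t \<in> {t0..\<tau>}"
  have "integral {t0..t} (\<lambda>s. g s + B (w s)) = integral {t0..t} g + B (integral {t0..t} w)"
    using has_integral_add[OF integrable_integral[OF g[OF t]] B[OF t]] by (rule integral_unique)
  then show "integral {t0..t} w \<in> D \<and> A (integral {t0..t} w) - B (integral {t0..t} w)
      = w t - x - integral {t0..t} (\<lambda>s. g s + B (w s))"
    using sol t by (simp add: integrated_solution_def)
qed

lemma has_integral_inv_embedding:
  fixes \<iota> :: "'y::banach \<Rightarrow> 'x::banach" and H :: "'y \<Rightarrow> 'z::banach" and a b :: real
  assumes \<iota>: "bounded_linear \<iota>" "inj \<iota>" and H: "bounded_linear H"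
    and v: "continuous_on {a..b} v" and w: "\<And>s. s \<in> {a..b} \<Longrightarrow> w s = \<iota> (v s)"
  shows "((\<lambda>s. H (inv \<iota> (w s))) has_integral H (inv \<iota> (integral {a..b} w))) {a..b}"
proof -
  have v_int: "v integrable_on {a..b}" using integrable_continuous_real[OF v] .
  have "integral {a..b} w = integral {a..b} (\<iota> \<circ> v)" using w by (auto intro: integral_cong)
  also have "\<dots> = \<iota> (integral {a..b} v)" by (rule integral_linear[OF v_int \<iota>(1)])
  finally have "H (inv \<iota> (integral {a..b} w)) = H (integral {a..b} v)" by (simp add: inv_f_f[OF \<iota>(2)])
  moreover have "((\<lambda>s. H (v s)) has_integral H (integral {a..b} v)) {a..b}"
    using has_integral_linear[OF integrable_integral[OF v_int] H] by (simp add: o_def)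
  ultimately have "((\<lambda>s. H (v s)) has_integral H (inv \<iota> (integral {a..b} w))) {a..b}" by simp
  then show ?thesis by (rule has_integral_eq[rotated]) (simp add: w inv_f_f[OF \<iota>(2)])
qed

locale embedded_smoothing =
  fixes \<iota> :: "'y::banach \<Rightarrow> 'x::banach" and S :: "real \<Rightarrow> 'x \<Rightarrow> 'x" and \<eta> :: "real \<Rightarrow> real"
  assumes embedding: "bounded_linear \<iota>" "inj \<iota>" and c0: "c0_semigroup S"
    and invariant: "\<forall>t\<ge>0. \<forall>y. S t (\<iota> y) \<in> range \<iota>"
    and continuous_in_Y: "\<forall>y. continuous_on {0..} (\<lambda>t. inv \<iota> (S t (\<iota> y)))"
    and eta_nonneg: "\<forall>\<delta>>0. \<eta> \<delta> \<ge> 0"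
    and eta_lim: "(\<eta> \<longlongrightarrow> 0) (at_right 0)"
    and smoothing: "\<forall>s\<^sub>0 s\<^sub>1 (\<phi>::real \<Rightarrow> 'x). 0 \<le> s\<^sub>0 \<longrightarrow> s\<^sub>0 < s\<^sub>1 \<longrightarrow> continuous_on {s\<^sub>0..s\<^sub>1} \<phi> \<longrightarrow>
          integral {s\<^sub>0..s\<^sub>1} (\<lambda>s. S (s\<^sub>1 - s) (\<phi> s)) \<in> range \<iota> \<and>
          norm (inv \<iota> (integral {s\<^sub>0..s\<^sub>1} (\<lambda>s. S (s\<^sub>1 - s) (\<phi> s))))
            \<le> \<eta> (s\<^sub>1 - s\<^sub>0) * (SUP s\<in>{s\<^sub>0..s\<^sub>1}. norm (\<phi> s))"
begin

definition S\<^sub>Y :: "real \<Rightarrow> 'y \<Rightarrow> 'y" where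
  "S\<^sub>Y t y = inv \<iota> (S t (\<iota> y))"

lemma embedding_S\<^sub>Y: "t \<ge> 0 \<Longrightarrow> \<iota> (S\<^sub>Y t y) = S t (\<iota> y)"
  using invariant by (simp add: S\<^sub>Y_def f_inv_into_f)

lemma convolution_embedded:
  assumes "0 \<le> a" "a < s" "continuous_on {a..s} g" "\<And>\<sigma>. \<sigma> \<in> {a..s} \<Longrightarrow> norm (g \<sigma>) \<le> B"
  obtains c where "integral {a..s} (\<lambda>\<sigma>. S (s - \<sigma>) (g \<sigma>)) = \<iota> c" "norm c \<le> \<eta> (s - a) * B"
proof -
  let ?I = "integral {a..s} (\<lambda>\<sigma>. S (s - \<sigma>) (g \<sigma>))"
  have "?I \<in> range \<iota> \<and> norm (inv \<iota> ?I) \<le> \<eta> (s - a) * (SUP \<sigma>\<in>{a..s}. norm (g \<sigma>))"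
    using smoothing assms by auto
  moreover have "(SUP \<sigma>\<in>{a..s}. norm (g \<sigma>)) \<le> B" using assms by (intro cSUP_least) auto
  moreover have "\<eta> (s - a) \<ge> 0" using eta_nonneg assms by simp
  ultimately have "?I = \<iota> (inv \<iota> ?I)" "norm (inv \<iota> ?I) \<le> \<eta> (s - a) * B"
    by (auto simp: f_inv_into_f intro: order_trans mult_left_mono)
  then show ?thesis using that by blast
qed

lemma mild_solution_embedded:
  assumes g: "continuous_on {t0..\<tau>} g" and t0: "0 \<le> t0" and w: "mild_solution S t0 \<tau> (\<iota> y0) g w"
  obtains v where "continuous_on {t0..\<tau>} v" "\<And>s. s \<in> {t0..\<tau>} \<Longrightarrow> w s = \<iota> (v s)"
proof -
  note inv_\<iota> = inv_f_f[OF embedding(2)]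
  obtain B where B: "\<And>\<sigma>. \<sigma> \<in> {t0..\<tau>} \<Longrightarrow> norm (g \<sigma>) \<le> B"
    using compact_imp_bounded[OF compact_continuous_image[OF g]] unfolding bounded_iff by blast
  have step: "\<exists>c. w s = \<iota> (S\<^sub>Y (s - a) z + c) \<and> norm c \<le> \<eta> (s - a) * B"
    if as: "t0 \<le> a" "a < s" "s \<le> \<tau>" and z: "w a = \<iota> z" for a s z
  proof -
    obtain c where c: "integral {a..s} (\<lambda>\<sigma>. S (s - \<sigma>) (g \<sigma>)) = \<iota> c" "norm c \<le> \<eta> (s - a) * B"
      using convolution_embedded[of a s g B] as t0 B continuous_on_subset[OF g] by auto
    have "w s = \<iota> (S\<^sub>Y (s - a) z) + \<iota> c"
      using mild_solution_step[OF c0 g w, of a s] as z c(1) embedding_S\<^sub>Y by simp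
    then show ?thesis using c(2) linear_simps(1)[OF embedding(1)] by auto
  qed
  define v where "v s = inv \<iota> (w s)" for s
  have w_v: "w s = \<iota> (v s)" if s: "s \<in> {t0..\<tau>}" for s
  proof -
    have w_t0: "w t0 = \<iota> y0" using w s by (simp add: mild_solution_def c0_semigroup_0[OF c0])
    show ?thesis
    proof (cases "s = t0")
      case True
      then show ?thesis using w_t0 by (simp add: v_def inv_\<iota>)
    next
      case False
      then obtain c where "w s = \<iota> (S\<^sub>Y (s - t0) y0 + c)" using step[of t0 s y0] w_t0 s by auto
      then show ?thesis by (simp add: v_def inv_\<iota>)
    qed
  qed
  have "continuous_on {t0..\<tau>} v"
  proof (rule continuous_on_local_propagation[where P = S\<^sub>Y and \<epsilon> = "\<lambda>\<delta>. \<eta> \<delta> * B"])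
    fix a s assume as: "t0 \<le> a" "a < s" "s \<le> \<tau>"
    then obtain c where "w s = \<iota> (S\<^sub>Y (s - a) (v a) + c)" "norm c \<le> \<eta> (s - a) * B"
      using step[OF as w_v[of a]] by auto
    then show "norm (v s - S\<^sub>Y (s - a) (v a)) \<le> \<eta> (s - a) * B" by (simp add: v_def inv_\<iota>)
  next
    show "((\<lambda>\<delta>. \<eta> \<delta> * B) \<longlongrightarrow> 0) (at_right 0)" by (rule tendsto_mult_left_zero[OF eta_lim])
  qed (use continuous_in_Y in \<open>auto simp: S\<^sub>Y_def c0_semigroup_0[OF c0] inv_\<iota>\<close>)
  with w_v that show ?thesis by blast
qed

end

theorem lemma3p9:
  fixes \<iota> :: "'y::banach \<Rightarrow> 'x::banach"
    and T :: ereal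
    and D :: "'x set" and G :: "'x \<Rightarrow> 'x"
    and S S\<^sub>\<gamma> :: "real \<Rightarrow> 'x \<Rightarrow> 'x"
    and \<eta> :: "real \<Rightarrow> real"
    and \<gamma> :: real and H :: "'y \<Rightarrow> 'x"
    and t\<^sub>0 \<tau> :: real and f :: "real \<Rightarrow> 'x" and u\<^sub>0 :: 'y
    and u :: "real \<Rightarrow> 'x"
  assumes emb: "bounded_linear \<iota>" "inj \<iota>"
    and T_pos: "T > 0"
    and gen: "generates D G S"
    and S_Y: "\<forall>t\<ge>0. \<forall>y. S t (\<iota> y) \<in> range \<iota>"
    and S_Y_cont: "\<forall>y. continuous_on {0..} (\<lambda>t. inv \<iota> (S t (\<iota> y)))"
    and eta_pos: "\<forall>\<delta>>0. \<eta> \<delta> > 0"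
    and eta_lim: "(\<eta> \<longlongrightarrow> 0) (at_right 0)"
    and smoothing: "\<forall>s\<^sub>0 s\<^sub>1 (\<phi>::real \<Rightarrow> 'x). 0 \<le> s\<^sub>0 \<longrightarrow> s\<^sub>0 < s\<^sub>1 \<longrightarrow> continuous_on {s\<^sub>0..s\<^sub>1} \<phi> \<longrightarrow>
          integral {s\<^sub>0..s\<^sub>1} (\<lambda>s. S (s\<^sub>1 - s) (\<phi> s)) \<in> range \<iota> \<and>
          norm (inv \<iota> (integral {s\<^sub>0..s\<^sub>1} (\<lambda>s. S (s\<^sub>1 - s) (\<phi> s))))
            \<le> \<eta> (s\<^sub>1 - s\<^sub>0) * (SUP s\<in>{s\<^sub>0..s\<^sub>1}. norm (\<phi> s))"
    and D_sub: "D \<subseteq> range \<iota>"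
    and D_dense: "closure (\<iota> -` D) = UNIV"
    and H: "bounded_linear H"
    and gen_pert: "generates D (\<lambda>x. G x - \<gamma> *\<^sub>R H (inv \<iota> x)) S\<^sub>\<gamma>"
    and times: "0 \<le> t\<^sub>0" "t\<^sub>0 < \<tau>" "ereal \<tau> < T"
    and f: "continuous_on {t\<^sub>0..\<tau>} f"
    and u_def: "\<forall>t\<in>{t\<^sub>0..\<tau>}. u t = S (t - t\<^sub>0) (\<iota> u\<^sub>0) + integral {t\<^sub>0..t} (\<lambda>s. S (t - s) (f s))"
  shows "\<forall>t\<in>{t\<^sub>0..\<tau>}.
           (\<lambda>s. S\<^sub>\<gamma> (t - s) (f s + \<gamma> *\<^sub>R H (inv \<iota> (u s)))) integrable_on {t\<^sub>0..t} \<and>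
           u t = S\<^sub>\<gamma> (t - t\<^sub>0) (\<iota> u\<^sub>0)
                 + integral {t\<^sub>0..t} (\<lambda>s. S\<^sub>\<gamma> (t - s) (f s + \<gamma> *\<^sub>R H (inv \<iota> (u s))))"
proof -
  have S: "c0_semigroup S" and S\<^sub>\<gamma>: "c0_semigroup S\<^sub>\<gamma>"
    using generates_c0_semigroup[OF gen] generates_c0_semigroup[OF gen_pert] .
  have u: "mild_solution S t\<^sub>0 \<tau> (\<iota> u\<^sub>0) f u" using u_def by (simp add: mild_solution_def)
  have "embedded_smoothing \<iota> S \<eta>"
    using emb S S_Y S_Y_cont eta_pos eta_lim smoothing by (simp add: embedded_smoothing_def less_imp_le)
  then interpret embedded_smoothing \<iota> S \<eta> .
  obtain v where v: "continuous_on {t\<^sub>0..\<tau>} v" "\<And>s. s \<in> {t\<^sub>0..\<tau>} \<Longrightarrow> u s = \<iota> (v s)"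
    using mild_solution_embedded[OF f times(1) u] by blast
  define F where "F s = f s + \<gamma> *\<^sub>R H (inv \<iota> (u s))" for s
  have "continuous_on {t\<^sub>0..\<tau>} (\<lambda>s. f s + \<gamma> *\<^sub>R H (v s))"
    by (intro continuous_intros f continuous_on_compose2[OF linear_continuous_on[OF H] v(1)]) auto
  then have F: "continuous_on {t\<^sub>0..\<tau>} F"
    by (rule continuous_on_eq) (simp add: F_def v(2) inv_f_f[OF emb(2)])
  have "integrated_solution G D t\<^sub>0 \<tau> (\<iota> u\<^sub>0) f u" by (rule mild_solution_imp_integrated[OF gen f u])
  then have "integrated_solution (\<lambda>x. G x - \<gamma> *\<^sub>R H (inv \<iota> x)) D t\<^sub>0 \<tau> (\<iota> u\<^sub>0) F u"
    unfolding F_def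
  proof (rule integrated_solution_perturb)
    fix t assume t: "t \<in> {t\<^sub>0..\<tau>}"
    show "f integrable_on {t\<^sub>0..t}" using t by (intro integrable_continuous_real continuous_on_subset[OF f]) auto
    show "((\<lambda>s. \<gamma> *\<^sub>R H (inv \<iota> (u s))) has_integral \<gamma> *\<^sub>R H (inv \<iota> (integral {t\<^sub>0..t} u))) {t\<^sub>0..t}"
      using t by (intro has_integral_cmul has_integral_inv_embedding[OF emb H continuous_on_subset[OF v(1)]] v(2))
        auto
  qed
  then have "mild_solution S\<^sub>\<gamma> t\<^sub>0 \<tau> (\<iota> u\<^sub>0) F u"
    by (rule integrated_solution_imp_mild[OF gen_pert F mild_solution_continuous[OF S f u]])
  then show ?thesis
    using convolution_integrable[OF S\<^sub>\<gamma> continuous_on_subset[OF F]] by (auto simp: mild_solution_def F_def)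
qed

end
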